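(* Under the assumptions in the context, $M_J(\mathbf d_A)=\Theta(M(\mathbf d_A))$, and with probability $1-o(1)$, $M_J(\mathbf d_A)-M_J(\mathbf d_S)=o(M(\mathbf d_A))$.
   Context: All asymptotics are as $n\to\infty$. For each $n$, $\mathbf d=(d(1),\dots,d(n))$ is a sequence of integers with $1\le d(1)\le\dots\le d(n)$ and even sum; $M=\sum_i d(i)$, $\Delta=d(n)$. Let $p=p(n)\in(0,1)$ with $p<1-\varepsilon$ for a constant $\varepsilon>0$ and $\Delta^2p^{-12}\log^{12}M\le\delta pM$ for a function $\delta=\delta(n)\to0$ with $\delta^{-1}=O(\log\log M)$. $G$ is a uniformly random simple graph on $[n]$ with degree sequence $\mathbf d$, $S\subseteq[n]$ contains each vertex independently with probability $p$, and $\mathbf d_S$ is the degree sequence of $G[S]$. For a sequence $\mathbf x$, $M(\mathbf x)$ is the sum of its entries, $M_J(\mathbf x)$ the sum of its entries not equal to $2$, $n_k(\mathbf x)$ the number of entries equal to $k$. Definition of $\mathbf d_A$: with $X_j\sim\mathrm{Bin}(j,p)$, $\tilde N(k)=\lfloor p\sum_{i\in[n]}\Pr(X_{d(i)}\le k)+\tfrac12\rfloor$ for $k\ge0$, $\tilde N(-1)=0$; $\mathbf d_A$ is the non-decreasing sequence with $n_k(\mathbf d_A)=\tilde N(k)-\tilde N(k-1)$. *)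

theory Defs
  imports "HOL-Probability.Probability" "HOL-Library.Landau_Symbols"
begin

text \<open>Vertices are 0..<n (the paper's [n] shifted by one); a degree sequence is a
function d :: nat => nat, vertex i having degree d i.  A simple graph on 0..<n is a
set of 2-element subsets of 0..<n.\<close>

definition simple_graphs_deg :: "nat \<Rightarrow> (nat \<Rightarrow> nat) \<Rightarrow> nat set set set" where
  "simple_graphs_deg n d =
     {E. E \<subseteq> {e. \<exists>i j. i < n \<and> j < n \<and> i \<noteq> j \<and> e = {i, j}}
         \<and> (\<forall>i<n. card {e\<in>E. i \<in> e} = d i)}"

definition seqM :: "nat list \<Rightarrow> nat" where
  "seqM x = sum_list x"

definition seqMJ :: "nat list \<Rightarrow> nat" where
  "seqMJ x = sum_list (filter (\<lambda>a. a \<noteq> 2) x)"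

definition seqn :: "nat \<Rightarrow> nat list \<Rightarrow> nat" where
  "seqn k x = count_list x k"

definition induced_degseq :: "nat set set \<Rightarrow> nat set \<Rightarrow> nat list" where
  "induced_degseq E S =
     sort (map (\<lambda>v. card {e\<in>E. v \<in> e \<and> e \<subseteq> S}) (sorted_list_of_set S))"

definition Ntil :: "nat \<Rightarrow> (nat \<Rightarrow> nat) \<Rightarrow> real \<Rightarrow> nat \<Rightarrow> int" where
  "Ntil n d p k =
     \<lfloor>p * (\<Sum>i<n. measure_pmf.prob (binomial_pmf (d i) p) {..k}) + 1/2\<rfloor>"

definition nA :: "nat \<Rightarrow> (nat \<Rightarrow> nat) \<Rightarrow> real \<Rightarrow> nat \<Rightarrow> nat" where
  "nA n d p k = nat (if k = 0 then Ntil n d p 0 else Ntil n d p k - Ntil n d p (k - 1))"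

text \<open>d_A: the non-decreasing sequence with n_k(d_A) copies of k.  Entries beyond the
maximum degree do not occur, since tilde N is constant from there on.\<close>
definition dA :: "nat \<Rightarrow> (nat \<Rightarrow> nat) \<Rightarrow> real \<Rightarrow> nat list" where
  "dA n d p = concat (map (\<lambda>k. replicate (nA n d p k) k)
                         [0..<Suc (Max (insert 0 (d ` {..<n})))])"

definition random_subset :: "nat \<Rightarrow> real \<Rightarrow> nat set pmf" where
  "random_subset n p =
     map_pmf (\<lambda>f. {i\<in>{..<n}. f i}) (Pi_pmf {..<n} False (\<lambda>_. bernoulli_pmf p))"

definition graph_subset_pmf :: "nat \<Rightarrow> (nat \<Rightarrow> nat) \<Rightarrow> real \<Rightarrow> (nat set set \<times> nat set) pmf" where
  "graph_subset_pmf n d p = pair_pmf (pmf_of_set (simple_graphs_deg n d)) (random_subset n p)"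

end

theory Submission
  imports Defs
begin

text \<open>The counts \<open>n\<^sub>k(d\<^sub>A)\<close> are, up to rounding, \<open>a\<^sub>k = p \<Sum>\<^sub>i Pr(Bin(d(i), p) = k)\<close>,
the expected number of vertices of \<open>S\<close> having degree \<open>k\<close> in \<open>G[S]\<close>.  Since
\<open>\<Sum>\<^sub>k k a\<^sub>k = p\<^sup>2 M\<close>, both \<open>M(d\<^sub>A) \<approx> p\<^sup>2 M\<close> and \<open>M\<^sub>J(d\<^sub>A) \<approx> p\<^sup>2 M - 2 a\<^sub>2\<close> hold up to
\<open>O(\<Delta>\<^sup>2)\<close>, and \<open>2 Pr(Bin(d, p) = 2) \<le> (1 - min(1/9, \<epsilon>)) d p\<close> keeps \<open>M\<^sub>J(d\<^sub>A)\<close> a constant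
fraction of \<open>M(d\<^sub>A)\<close>.  On the random side \<open>M\<^sub>J(d\<^sub>S) = 2 e(G[S]) - 2 n\<^sub>2(d\<^sub>S)\<close>; for every
fixed graph both terms are sums of indicators, each depending on \<open>O(\<Delta>)\<close> others, with
means \<open>p\<^sup>2 M / 2\<close> and \<open>a\<^sub>2\<close>, so Chebyshev's inequality gives concentration on a scale
\<open>q p\<^sup>2 M\<close> with \<open>q\<^sup>4 \<approx> \<delta>\<close>.\<close>

section \<open>Expectations over finite supports\<close>

text \<open>A finite sum over the support: its algebra needs no integrability side conditions.\<close>

definition expectation_fin :: "'a pmf \<Rightarrow> ('a \<Rightarrow> real) \<Rightarrow> real" where
  "expectation_fin M X = (\<Sum>x\<in>set_pmf M. pmf M x * X x)"

lemma expectation_fin_eq_expectation: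
  assumes "finite (set_pmf M)"
  shows "expectation_fin M X = measure_pmf.expectation M X"
  unfolding expectation_fin_def using assms
  by (subst integral_measure_pmf_real[of "set_pmf M"]) (auto simp: mult.commute)

lemma expectation_fin_const: "finite (set_pmf M) \<Longrightarrow> expectation_fin M (\<lambda>_. c) = c"
  unfolding expectation_fin_def by (simp add: sum_distrib_right[symmetric] sum_pmf_eq_1)

lemma expectation_fin_add:
  "expectation_fin M (\<lambda>x. X x + Y x) = expectation_fin M X + expectation_fin M Y"
  unfolding expectation_fin_def by (simp add: distrib_left sum.distrib)

lemma expectation_fin_diff:
  "expectation_fin M (\<lambda>x. X x - Y x) = expectation_fin M X - expectation_fin M Y"
  unfolding expectation_fin_def by (simp add: right_diff_distrib sum_subtractf)

lemma expectation_fin_cmult: "expectation_fin M (\<lambda>x. c * X x) = c * expectation_fin M X"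
  unfolding expectation_fin_def by (simp add: sum_distrib_left algebra_simps)

lemma expectation_fin_sum:
  "expectation_fin M (\<lambda>x. \<Sum>j\<in>J. X j x) = (\<Sum>j\<in>J. expectation_fin M (X j))"
  unfolding expectation_fin_def by (simp add: sum_distrib_left sum.swap[of _ J])

lemma expectation_fin_cong:
  "(\<And>x. x \<in> set_pmf M \<Longrightarrow> X x = Y x) \<Longrightarrow> expectation_fin M X = expectation_fin M Y"
  unfolding expectation_fin_def by (auto intro!: sum.cong)

lemma expectation_fin_mono:
  "(\<And>x. x \<in> set_pmf M \<Longrightarrow> X x \<le> Y x) \<Longrightarrow> expectation_fin M X \<le> expectation_fin M Y"
  unfolding expectation_fin_def by (auto intro!: sum_mono mult_left_mono)

lemma expectation_fin_nonneg:
  "(\<And>x. x \<in> set_pmf M \<Longrightarrow> 0 \<le> X x) \<Longrightarrow> 0 \<le> expectation_fin M X"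
  unfolding expectation_fin_def by (auto intro!: sum_nonneg)

lemma expectation_fin_map_pmf:
  assumes "finite (set_pmf M)"
  shows "expectation_fin (map_pmf h M) X = expectation_fin M (\<lambda>x. X (h x))"
  using assms by (simp add: expectation_fin_eq_expectation integral_map_pmf)

lemma expectation_fin_pair_pmf:
  "expectation_fin (pair_pmf A B) Z = expectation_fin A (\<lambda>a. expectation_fin B (\<lambda>b. Z (a, b)))"
  unfolding expectation_fin_def set_pair_pmf sum_distrib_left sum.cartesian_product
  by (intro sum.cong) (auto simp: pmf_pair)

lemma expectation_fin_pair_pmf_mult:
  "expectation_fin (pair_pmf A B) (\<lambda>z. X (fst z) * Y (snd z))
     = expectation_fin A X * expectation_fin B Y"
  unfolding expectation_fin_pair_pmf
  by (simp add: expectation_fin_cmult mult.commute[of _ "expectation_fin B Y"])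

lemma prob_eq_expectation_fin:
  assumes "finite (set_pmf M)"
  shows "measure_pmf.prob M {x. P x} = expectation_fin M (\<lambda>x. of_bool (P x))"
proof -
  have "measure_pmf.prob M {x. P x} = measure_pmf.prob M ({x. P x} \<inter> set_pmf M)"
    by (simp add: measure_Int_set_pmf)
  also have "\<dots> = sum (pmf M) ({x. P x} \<inter> set_pmf M)"
    using assms by (intro measure_measure_pmf_finite) auto
  also have "\<dots> = (\<Sum>x\<in>set_pmf M. if x \<in> {x. P x} then pmf M x else 0)"
    using assms by (subst Int_commute, subst sum.inter_restrict) auto
  finally show ?thesis
    unfolding expectation_fin_def by (simp add: of_bool_def if_distrib cong: if_cong)
qed

lemma chebyshev_expectation_fin:
  assumes "finite (set_pmf M)" "t > 0"
  shows "measure_pmf.prob M {x. t < \<bar>F x - c\<bar>} \<le> expectation_fin M (\<lambda>x. (F x - c)\<^sup>2) / t\<^sup>2"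
proof -
  have "measure_pmf.prob M {x. t < \<bar>F x - c\<bar>} = expectation_fin M (\<lambda>x. of_bool (t < \<bar>F x - c\<bar>))"
    using assms(1) by (rule prob_eq_expectation_fin)
  also have "\<dots> \<le> expectation_fin M (\<lambda>x. (F x - c)\<^sup>2 / t\<^sup>2)"
  proof (rule expectation_fin_mono)
    fix x
    show "of_bool (t < \<bar>F x - c\<bar>) \<le> (F x - c)\<^sup>2 / t\<^sup>2"
    proof (cases "t < \<bar>F x - c\<bar>")
      case True
      then have "t\<^sup>2 \<le> \<bar>F x - c\<bar>\<^sup>2" using assms(2) by (intro power_mono) auto
      then show ?thesis using True assms(2) by (simp add: power2_abs)
    qed auto
  qed
  also have "\<dots> = expectation_fin M (\<lambda>x. (F x - c)\<^sup>2) / t\<^sup>2"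
    using expectation_fin_cmult[of M "1/t\<^sup>2" "\<lambda>x. (F x - c)\<^sup>2"] by (simp add: field_simps)
  finally show ?thesis .
qed

lemma variance_sum_le_dependent_pairs:
  fixes X :: "'j \<Rightarrow> 'a \<Rightarrow> real"
  assumes fin: "finite (set_pmf M)" "finite J"
  assumes nonneg: "\<And>j x. j \<in> J \<Longrightarrow> 0 \<le> X j x"
  assumes uncorrelated: "\<And>j k. j \<in> J \<Longrightarrow> k \<in> J \<Longrightarrow> \<not> Dep j k \<Longrightarrow>
      expectation_fin M (\<lambda>x. X j x * X k x) = expectation_fin M (X j) * expectation_fin M (X k)"
  shows "expectation_fin M (\<lambda>x. ((\<Sum>j\<in>J. X j x) - (\<Sum>j\<in>J. expectation_fin M (X j)))\<^sup>2)
           \<le> (\<Sum>j\<in>J. \<Sum>k\<in>{k\<in>J. Dep j k}. expectation_fin M (\<lambda>x. X j x * X k x))"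
proof -
  define mu where "mu = (\<Sum>j\<in>J. expectation_fin M (X j))"
  have "expectation_fin M (\<lambda>x. ((\<Sum>j\<in>J. X j x) - mu)\<^sup>2)
       = expectation_fin M (\<lambda>x. (\<Sum>j\<in>J. X j x)\<^sup>2 - 2 * mu * (\<Sum>j\<in>J. X j x) + mu\<^sup>2)"
    by (simp add: power2_eq_square algebra_simps)
  also have "\<dots> = expectation_fin M (\<lambda>x. (\<Sum>j\<in>J. X j x)\<^sup>2) - mu\<^sup>2"
    by (simp add: expectation_fin_add expectation_fin_diff expectation_fin_cmult
        expectation_fin_const fin expectation_fin_sum mu_def power2_eq_square)
  also have "\<dots> = (\<Sum>j\<in>J. \<Sum>k\<in>J. expectation_fin M (\<lambda>x. X j x * X k x)
                      - expectation_fin M (X j) * expectation_fin M (X k))"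
    by (simp add: power2_eq_square sum_product expectation_fin_sum mu_def sum_subtractf)
  also have "\<dots> \<le> (\<Sum>j\<in>J. \<Sum>k\<in>J. if Dep j k then expectation_fin M (\<lambda>x. X j x * X k x) else 0)"
  proof (intro sum_mono)
    fix j k assume jk: "j \<in> J" "k \<in> J"
    have "0 \<le> expectation_fin M (X j) * expectation_fin M (X k)"
      using jk nonneg by (intro mult_nonneg_nonneg expectation_fin_nonneg) auto
    then show "expectation_fin M (\<lambda>x. X j x * X k x) - expectation_fin M (X j) * expectation_fin M (X k)
          \<le> (if Dep j k then expectation_fin M (\<lambda>x. X j x * X k x) else 0)"
      using uncorrelated[OF jk] by auto
  qed
  also have "\<dots> = (\<Sum>j\<in>J. \<Sum>k\<in>{k\<in>J. Dep j k}. expectation_fin M (\<lambda>x. X j x * X k x))"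
    using fin by (simp add: sum.inter_filter)
  finally show ?thesis unfolding mu_def .
qed

lemma prob_pair_pmf_le:
  assumes "finite (set_pmf A)" "finite (set_pmf B)"
    and "\<And>a. a \<in> set_pmf A \<Longrightarrow> measure_pmf.prob B {b. P a b} \<le> \<beta>"
  shows "measure_pmf.prob (pair_pmf A B) {z. P (fst z) (snd z)} \<le> \<beta>"
proof -
  have "measure_pmf.prob (pair_pmf A B) {z. P (fst z) (snd z)}
      = expectation_fin A (\<lambda>a. expectation_fin B (\<lambda>b. of_bool (P a b)))"
    using assms(1,2) by (simp add: prob_eq_expectation_fin expectation_fin_pair_pmf)
  also have "\<dots> = expectation_fin A (\<lambda>a. measure_pmf.prob B {b. P a b})"
    using assms(2) by (intro expectation_fin_cong) (simp add: prob_eq_expectation_fin)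
  also have "\<dots> \<le> expectation_fin A (\<lambda>_. \<beta>)"
    using assms(3) by (intro expectation_fin_mono) auto
  also have "\<dots> = \<beta>" using assms(1) by (rule expectation_fin_const)
  finally show ?thesis .
qed

section \<open>Independent coin flips\<close>

abbreviation coin_flips :: "nat set \<Rightarrow> real \<Rightarrow> (nat \<Rightarrow> bool) pmf" where
  "coin_flips I p \<equiv> Pi_pmf I False (\<lambda>_. bernoulli_pmf p)"

lemma finite_set_Pi_pmf_bool:
  fixes P :: "'a \<Rightarrow> bool pmf"
  assumes "finite I"
  shows "finite (set_pmf (Pi_pmf I dflt P))"
  using assms by (simp add: set_Pi_pmf finite_PiE_dflt)

lemma expectation_fin_Pi_pmf_mult_disjoint:
  fixes X Y :: "('a \<Rightarrow> bool) \<Rightarrow> real" and P :: "'a \<Rightarrow> bool pmf"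
  assumes fin: "finite I" and AB: "A \<subseteq> I" "B \<subseteq> I" "A \<inter> B = {}"
    and X: "\<And>f g. (\<And>i. i \<in> A \<Longrightarrow> f i = g i) \<Longrightarrow> X f = X g"
    and Y: "\<And>f g. (\<And>i. i \<in> B \<Longrightarrow> f i = g i) \<Longrightarrow> Y f = Y g"
  shows "expectation_fin (Pi_pmf I dflt P) (\<lambda>f. X f * Y f)
           = expectation_fin (Pi_pmf I dflt P) X * expectation_fin (Pi_pmf I dflt P) Y"
proof -
  define h :: "('a \<Rightarrow> bool) \<times> ('a \<Rightarrow> bool) \<Rightarrow> 'a \<Rightarrow> bool"
    where "h = (\<lambda>(f,g) x. if x \<in> A then f x else g x)"
  define R where "R = pair_pmf (Pi_pmf A dflt P) (Pi_pmf (I - A) dflt P)"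
  have fA: "finite A" using fin AB finite_subset by blast
  have U: "A \<union> (I - A) = I" using AB by auto
  have split: "Pi_pmf I dflt P = map_pmf h R"
    using Pi_pmf_union[of A "I - A" dflt P] fA fin unfolding U h_def R_def by auto
  have finR: "finite (set_pmf R)"
    unfolding R_def using fA fin by (simp add: finite_set_Pi_pmf_bool)
  have via_R: "expectation_fin (Pi_pmf I dflt P) Z = expectation_fin R (\<lambda>z. Z (h z))" for Z
    unfolding split using finR by (rule expectation_fin_map_pmf)
  have hX: "X (h z) = X (fst z)" for z
    by (rule X) (auto simp: h_def split: prod.splits)
  have hY: "Y (h z) = Y (snd z)" for z
    by (rule Y) (use AB in \<open>auto simp: h_def split: prod.splits\<close>)
  have "expectation_fin (Pi_pmf I dflt P) (\<lambda>f. X f * Y f)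
      = expectation_fin (Pi_pmf A dflt P) X * expectation_fin (Pi_pmf (I - A) dflt P) Y"
    unfolding via_R hX hY R_def by (rule expectation_fin_pair_pmf_mult)
  moreover have "expectation_fin (Pi_pmf I dflt P) X = expectation_fin (Pi_pmf A dflt P) X"
    using expectation_fin_pair_pmf_mult[where X=X and Y="\<lambda>_. 1"
        and A="Pi_pmf A dflt P" and B="Pi_pmf (I - A) dflt P"] fin
    unfolding via_R hX R_def by (simp add: expectation_fin_const finite_set_Pi_pmf_bool)
  moreover have "expectation_fin (Pi_pmf I dflt P) Y = expectation_fin (Pi_pmf (I - A) dflt P) Y"
    using expectation_fin_pair_pmf_mult[where X="\<lambda>_. 1" and Y=Y
        and A="Pi_pmf A dflt P" and B="Pi_pmf (I - A) dflt P"] fA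
    unfolding via_R hY R_def by (simp add: expectation_fin_const finite_set_Pi_pmf_bool)
  ultimately show ?thesis by simp
qed

lemma expectation_fin_coin_flips_all:
  assumes fin: "finite I" and B: "B \<subseteq> I" and p: "0 \<le> p" "p \<le> 1"
  shows "expectation_fin (coin_flips I p) (\<lambda>f. of_bool (\<forall>i\<in>B. f i)) = p ^ card B"
proof -
  have fB: "finite B" using fin B finite_subset by blast
  have "expectation_fin (coin_flips I p) (\<lambda>f. of_bool (\<forall>i\<in>B. f i))
      = expectation_fin (coin_flips I p) (\<lambda>f. \<Prod>i\<in>I. (\<lambda>i b. if i \<in> B then of_bool b else 1) i (f i))"
  proof (rule expectation_fin_cong)
    fix f
    have "(\<Prod>i\<in>I. (if i \<in> B then of_bool (f i) else 1) :: real) = (\<Prod>i\<in>I \<inter> B. of_bool (f i))"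
      using fin by (simp add: prod.inter_restrict)
    also have "I \<inter> B = B" using B by auto
    also have "(\<Prod>i\<in>B. of_bool (f i) :: real) = of_bool (\<forall>i\<in>B. f i)"
      using fB by (cases "\<forall>i\<in>B. f i") (auto simp: prod_zero_iff intro: prod.neutral)
    finally show "(of_bool (\<forall>i\<in>B. f i) :: real)
        = (\<Prod>i\<in>I. (\<lambda>i b. if i \<in> B then of_bool b else 1) i (f i))"
      by (rule sym)
  qed
  also have "\<dots> = (\<Prod>i\<in>I. measure_pmf.expectation (bernoulli_pmf p)
                             (\<lambda>b. if i \<in> B then of_bool b else 1))"
    using fin
    by (subst expectation_fin_eq_expectation, simp add: finite_set_Pi_pmf_bool,
        rule expectation_prod_Pi_pmf) (auto intro!: integrable_measure_pmf_finite)
  also have "\<dots> = (\<Prod>i\<in>I. if i \<in> B then p else 1)"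
    using p by (intro prod.cong) (auto simp: integral_bernoulli_pmf)
  also have "\<dots> = p ^ card B"
    using fin B by (simp add: prod.If_cases Int_absorb1)
  finally show ?thesis .
qed

lemma expectation_fin_coin_flips_coord:
  assumes "finite I" "v \<in> I" "0 \<le> p" "p \<le> 1"
  shows "expectation_fin (coin_flips I p) (\<lambda>f. of_bool (f v)) = p"
  using expectation_fin_coin_flips_all[of I "{v}" p] assms by simp

lemma expectation_fin_coin_flips_card_heads:
  assumes fin: "finite I" and N: "N \<subseteq> I" and p: "0 \<le> p" "p \<le> 1"
  shows "expectation_fin (coin_flips I p) (\<lambda>f. of_bool (card {u\<in>N. f u} = k))
           = pmf (binomial_pmf (card N) p) k"
proof -
  have fN: "finite N" using fin N finite_subset by blast
  have "binomial_pmf (card N) p = map_pmf (\<lambda>f. card {x\<in>N. f x}) (coin_flips N p)"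
    using fN p by (intro binomial_pmf_altdef') auto
  also have "coin_flips N p = map_pmf (\<lambda>f x. if x \<in> N then f x else False) (coin_flips I p)"
    using fin N by (rule Pi_pmf_subset)
  also have "map_pmf (\<lambda>f. card {x\<in>N. f x}) \<dots> = map_pmf (\<lambda>f. card {x\<in>N. f x}) (coin_flips I p)"
    by (simp add: map_pmf_comp cong: conj_cong)
  finally have "pmf (binomial_pmf (card N) p) k
      = measure_pmf.prob (coin_flips I p) {f. card {x\<in>N. f x} = k}"
    by (simp add: pmf_map vimage_def)
  also have "\<dots> = expectation_fin (coin_flips I p) (\<lambda>f. of_bool (card {u\<in>N. f u} = k))"
    using fin by (intro prob_eq_expectation_fin finite_set_Pi_pmf_bool)
  finally show ?thesis by simp
qed

lemma sum_binomial_pmf_mean: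
  assumes p: "0 \<le> p" "p \<le> 1" and "d \<le> m"
  shows "(\<Sum>k\<le>m. real k * pmf (binomial_pmf d p) k) = d * p"
proof -
  have p_01: "p \<in> {0..1}" using p by simp
  have "set_pmf (binomial_pmf d p) \<subseteq> {..m}"
    using p \<open>d \<le> m\<close> by (auto simp: set_pmf_iff binomial_eq_0)
  then have "(\<Sum>k\<le>m. real k * pmf (binomial_pmf d p) k) = expectation_fin (binomial_pmf d p) real"
    unfolding expectation_fin_def
    by (intro sum.mono_neutral_cong_right) (auto simp: set_pmf_iff)
  also have "\<dots> = expectation_fin (coin_flips {..<d} p) (\<lambda>f. real (card {x\<in>{..<d}. f x}))"
    unfolding binomial_pmf_altdef'[of "{..<d}" d p False, OF finite_lessThan card_lessThan p_01]
    by (rule expectation_fin_map_pmf) (simp add: finite_set_Pi_pmf_bool)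
  also have "\<dots> = expectation_fin (coin_flips {..<d} p) (\<lambda>f. \<Sum>x<d. of_bool (f x))"
    by (intro expectation_fin_cong) (simp add: of_bool_def sum.If_cases Int_def)
  also have "\<dots> = d * p"
    unfolding expectation_fin_sum using p by (simp add: expectation_fin_coin_flips_coord)
  finally show ?thesis .
qed

section \<open>Simple graphs with a given degree sequence\<close>

definition nbhd :: "nat set set \<Rightarrow> nat \<Rightarrow> nat set" where
  "nbhd E v = {u. {u, v} \<in> E}"

lemma nbhd_sym: "u \<in> nbhd E v \<longleftrightarrow> v \<in> nbhd E u"
  unfolding nbhd_def by (simp add: insert_commute)

context
  fixes n :: nat and d :: "nat \<Rightarrow> nat" and E :: "nat set set"
  assumes E: "E \<in> simple_graphs_deg n d"
begin

lemma simple_graph_edge: "e \<in> E \<Longrightarrow> \<exists>i j. i < n \<and> j < n \<and> i \<noteq> j \<and> e = {i, j}"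
  using E unfolding simple_graphs_deg_def by auto

lemma simple_graph_degree: "i < n \<Longrightarrow> card {e\<in>E. i \<in> e} = d i"
  using E unfolding simple_graphs_deg_def by auto

lemma simple_graph_edge_subset: "e \<in> E \<Longrightarrow> e \<subseteq> {..<n} \<and> card e = 2"
  using simple_graph_edge by fastforce

lemma finite_simple_graph: "finite E"
  by (rule finite_subset[of _ "Pow {..<n}"]) (auto dest: simple_graph_edge_subset)

lemma simple_graph_pair: "{u, v} \<in> E \<Longrightarrow> u \<noteq> v \<and> u < n \<and> v < n"
  using simple_graph_edge by (fastforce simp: doubleton_eq_iff)

lemma nbhd_subset: "nbhd E v \<subseteq> {..<n}"
  using simple_graph_pair unfolding nbhd_def by auto

lemma finite_nbhd: "finite (nbhd E v)"
  using nbhd_subset by (rule finite_subset) simp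

lemma not_in_nbhd: "v \<notin> nbhd E v"
  using simple_graph_pair[of v v] unfolding nbhd_def by auto

lemma card_edges_at_eq_card_nbhd:
  "card {e\<in>E. v \<in> e \<and> P e} = card {u\<in>nbhd E v. P {u, v}}"
proof -
  have "{e\<in>E. v \<in> e \<and> P e} = (\<lambda>u. {u, v}) ` {u\<in>nbhd E v. P {u, v}}"
  proof
    show "{e\<in>E. v \<in> e \<and> P e} \<subseteq> (\<lambda>u. {u, v}) ` {u\<in>nbhd E v. P {u, v}}"
    proof
      fix e assume e: "e \<in> {e\<in>E. v \<in> e \<and> P e}"
      then obtain u where "e = {u, v}" using simple_graph_edge by blast
      then show "e \<in> (\<lambda>u. {u, v}) ` {u\<in>nbhd E v. P {u, v}}"
        using e by (auto simp: nbhd_def)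
    qed
  qed (auto simp: nbhd_def)
  moreover have "inj_on (\<lambda>u. {u, v}) {u\<in>nbhd E v. P {u, v}}"
    by (auto simp: inj_on_def doubleton_eq_iff)
  ultimately show ?thesis by (simp add: card_image)
qed

lemma card_nbhd: "v < n \<Longrightarrow> card (nbhd E v) = d v"
  using card_edges_at_eq_card_nbhd[of v "\<lambda>_. True"] simple_graph_degree by simp

end

lemma handshake:
  assumes "finite V" "finite F" "\<And>e. e \<in> F \<Longrightarrow> e \<subseteq> V \<and> card e = 2"
  shows "(\<Sum>v\<in>V. card {e\<in>F. v \<in> e}) = 2 * card F"
proof -
  have "(\<Sum>v\<in>V. card {e\<in>F. v \<in> e}) = (\<Sum>v\<in>V. \<Sum>e\<in>F. if v \<in> e then 1 else 0)"
    using assms by (simp add: sum.If_cases Int_def)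
  also have "\<dots> = (\<Sum>e\<in>F. card (V \<inter> e))"
    using assms by (subst sum.swap) (simp add: sum.If_cases)
  also have "\<dots> = (\<Sum>e\<in>F. 2)"
    using assms by (intro sum.cong) (auto simp: Int_absorb1)
  finally show ?thesis by simp
qed

lemma handshake_simple_graph:
  assumes "E \<in> simple_graphs_deg n d"
  shows "(\<Sum>i<n. real (d i)) = 2 * real (card E)"
proof -
  have "(\<Sum>i<n. d i) = (\<Sum>v<n. card {e\<in>E. v \<in> e})"
    using simple_graph_degree[OF assms] by simp
  also have "\<dots> = 2 * card E"
    using assms by (intro handshake finite_simple_graph) (auto dest: simple_graph_edge_subset)
  finally show ?thesis by (metis of_nat_mult of_nat_numeral of_nat_sum)
qed

lemma finite_simple_graphs_deg: "finite (simple_graphs_deg n d)"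
  by (rule finite_subset[of _ "Pow (Pow {..<n})"]) (auto simp: simple_graphs_deg_def)

lemma seqMJ_induced_degseq:
  assumes E: "E \<in> simple_graphs_deg n d" and S: "S \<subseteq> {..<n}"
  shows "real (seqMJ (induced_degseq E S))
    = 2 * real (card {e\<in>E. e \<subseteq> S}) - 2 * real (card {v\<in>S. card {e\<in>E. v \<in> e \<and> e \<subseteq> S} = 2})"
proof -
  have fS: "finite S" using S finite_subset by blast
  define dg where "dg v = card {e\<in>E. v \<in> e \<and> e \<subseteq> S}" for v
  have "seqMJ (induced_degseq E S) = sum_list (filter (\<lambda>a. a \<noteq> 2) (map dg (sorted_list_of_set S)))"
    unfolding seqMJ_def induced_degseq_def dg_def by (simp flip: sum_mset_sum_list)
  also have "\<dots> = (\<Sum>v\<in>S. if dg v \<noteq> 2 then dg v else 0)"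
    using fS by (simp add: filter_map sum_list_map_filter' sum_list_distinct_conv_sum_set)
  finally have MJ: "seqMJ (induced_degseq E S) = (\<Sum>v\<in>S. if dg v \<noteq> 2 then dg v else 0)" .
  have "(\<Sum>v\<in>S. dg v) = (\<Sum>v\<in>S. card {e\<in>{e\<in>E. e \<subseteq> S}. v \<in> e})"
    unfolding dg_def by (intro sum.cong) (auto intro: arg_cong[where f=card])
  also have "\<dots> = 2 * card {e\<in>E. e \<subseteq> S}"
    using fS finite_simple_graph[OF E] by (intro handshake) (auto dest: simple_graph_edge_subset[OF E])
  finally have edges: "(\<Sum>v\<in>S. dg v) = 2 * card {e\<in>E. e \<subseteq> S}" .
  have "(\<Sum>v\<in>S. dg v)
      = (\<Sum>v\<in>S. if dg v \<noteq> 2 then dg v else 0) + (\<Sum>v\<in>S. if dg v = 2 then 2 else 0)"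
    by (simp only: sum.distrib[symmetric]) (intro sum.cong; auto)
  also have "(\<Sum>v\<in>S. if dg v = 2 then 2 else 0) = 2 * card {v\<in>S. dg v = 2}"
    using fS by (simp add: sum.If_cases Int_def)
  finally show ?thesis using edges unfolding MJ dg_def by linarith
qed

section \<open>The sequence \<open>d\<^sub>A\<close>\<close>

lemma seqMJ_le_seqM: "seqMJ x \<le> seqM x"
  unfolding seqMJ_def seqM_def by (induction x) auto

definition expected_deg_count :: "nat \<Rightarrow> (nat \<Rightarrow> nat) \<Rightarrow> real \<Rightarrow> nat \<Rightarrow> real" where
  "expected_deg_count n d p k = p * (\<Sum>i<n. pmf (binomial_pmf (d i) p) k)"

lemma expected_deg_count_nonneg: "0 \<le> p \<Longrightarrow> 0 \<le> expected_deg_count n d p k"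
  unfolding expected_deg_count_def by (simp add: sum_nonneg)

lemma Ntil_eq_floor_sum: "Ntil n d p k = \<lfloor>(\<Sum>j\<le>k. expected_deg_count n d p j) + 1/2\<rfloor>"
proof -
  have "measure_pmf.prob (binomial_pmf (d i) p) {..k} = (\<Sum>j\<le>k. pmf (binomial_pmf (d i) p) j)" for i
    by (rule measure_measure_pmf_finite) simp
  then have "p * (\<Sum>i<n. measure_pmf.prob (binomial_pmf (d i) p) {..k})
      = (\<Sum>j\<le>k. expected_deg_count n d p j)"
    unfolding expected_deg_count_def by (simp add: sum_distrib_left sum.swap[of _ "{..<n}"])
  then show ?thesis unfolding Ntil_def by simp
qed

lemma abs_round_sub_le: "\<bar>real_of_int \<lfloor>x + 1/2\<rfloor> - x\<bar> \<le> 1/2"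
  by linarith

lemma abs_nA_sub_expected_deg_count_le:
  assumes "0 \<le> p"
  shows "\<bar>real (nA n d p k) - expected_deg_count n d p k\<bar> \<le> 1"
proof (cases k)
  case 0
  let ?x = "expected_deg_count n d p 0"
  have "0 \<le> ?x" using expected_deg_count_nonneg assms by auto
  then have "real (nA n d p k) = real_of_int \<lfloor>?x + 1/2\<rfloor>"
    unfolding nA_def Ntil_eq_floor_sum using 0 by simp
  then show ?thesis using abs_round_sub_le[of ?x] 0 by simp
next
  case (Suc j)
  let ?F = "\<lambda>k. (\<Sum>i\<le>k. expected_deg_count n d p i)"
  have F: "?F (Suc j) = ?F j + expected_deg_count n d p (Suc j)" by simp
  then have "\<lfloor>?F j + 1/2\<rfloor> \<le> \<lfloor>?F (Suc j) + 1/2\<rfloor>"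
    using expected_deg_count_nonneg[OF assms] by (intro floor_mono) simp
  then have "real (nA n d p (Suc j)) = real_of_int \<lfloor>?F (Suc j) + 1/2\<rfloor> - real_of_int \<lfloor>?F j + 1/2\<rfloor>"
    unfolding nA_def Ntil_eq_floor_sum by simp
  then show ?thesis
    unfolding Suc using abs_round_sub_le[of "?F (Suc j)"] abs_round_sub_le[of "?F j"] F by linarith
qed

lemma abs_weighted_sum_nA_sub_le:
  assumes p: "0 \<le> p" and w: "\<And>k. k \<le> m \<Longrightarrow> 0 \<le> w k \<and> w k \<le> real m"
  shows "\<bar>(\<Sum>k\<le>m. w k * real (nA n d p k)) - (\<Sum>k\<le>m. w k * expected_deg_count n d p k)\<bar>
           \<le> (real m + 1)\<^sup>2"
proof -
  have "\<bar>(\<Sum>k\<le>m. w k * real (nA n d p k)) - (\<Sum>k\<le>m. w k * expected_deg_count n d p k)\<bar>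
      \<le> (\<Sum>k\<le>m. \<bar>w k\<bar> * \<bar>real (nA n d p k) - expected_deg_count n d p k\<bar>)"
    by (simp add: sum_subtractf[symmetric] right_diff_distrib[symmetric] abs_mult[symmetric] sum_abs)
  also have "\<dots> \<le> (\<Sum>k\<le>m. real m * 1)"
    using w abs_nA_sub_expected_deg_count_le[OF p]
    by (intro sum_mono mult_mono) auto
  also have "\<dots> = (real m + 1) * real m" by simp
  also have "\<dots> \<le> (real m + 1)\<^sup>2" by (simp add: power2_eq_square)
  finally show ?thesis .
qed

lemma seqM_dA: "seqM (dA n d p) = (\<Sum>k\<le>Max (insert 0 (d ` {..<n})). k * nA n d p k)"
proof -
  have rep: "sum_list (concat (map (\<lambda>k. replicate (c k) k) xs)) = (\<Sum>k\<leftarrow>xs. k * c k)" for c xs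
    by (induction xs) (auto simp: sum_list_replicate)
  show ?thesis
    unfolding seqM_def dA_def rep interv_sum_list_conv_sum_set_nat
    by (simp add: lessThan_atLeast0 flip: lessThan_Suc_atMost)
qed

lemma seqMJ_dA:
  "seqMJ (dA n d p) = (\<Sum>k\<le>Max (insert 0 (d ` {..<n})). if k \<noteq> 2 then k * nA n d p k else 0)"
proof -
  have rep: "sum_list (filter P (concat (map (\<lambda>k. replicate (c k) k) xs)))
      = (\<Sum>k\<leftarrow>xs. if P k then k * c k else 0)" for P c xs
    by (induction xs) (auto simp: sum_list_replicate filter_replicate)
  show ?thesis
    unfolding seqMJ_def dA_def rep interv_sum_list_conv_sum_set_nat
    by (simp add: lessThan_atLeast0 flip: lessThan_Suc_atMost)
qed

lemma le_Max_degree: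
  fixes d :: "nat \<Rightarrow> nat"
  shows "i < n \<Longrightarrow> d i \<le> Max (insert 0 (d ` {..<n}))"
  by (rule Max_ge) (simp_all add: finite_imageI)

lemma sum_mult_expected_deg_count:
  assumes "0 \<le> p" "p \<le> 1"
  shows "(\<Sum>k\<le>Max (insert 0 (d ` {..<n})). real k * expected_deg_count n d p k)
           = p * p * (\<Sum>i<n. real (d i))"
proof -
  let ?m = "Max (insert 0 (d ` {..<n}))"
  have "(\<Sum>k\<le>?m. real k * expected_deg_count n d p k)
      = p * (\<Sum>i<n. \<Sum>k\<le>?m. real k * pmf (binomial_pmf (d i) p) k)"
    unfolding expected_deg_count_def
    by (simp add: sum_distrib_left sum.swap[of _ "{..<n}"] algebra_simps)
  also have "\<dots> = p * (\<Sum>i<n. real (d i) * p)"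
    using assms le_Max_degree
    by (intro arg_cong[where f="\<lambda>x. p * x"] sum.cong sum_binomial_pmf_mean) auto
  finally show ?thesis by (simp add: sum_distrib_left sum_distrib_right algebra_simps)
qed

lemma sum_mult_expected_deg_count_not_2:
  assumes "0 \<le> p" "p \<le> 1"
  shows "(\<Sum>k\<le>Max (insert 0 (d ` {..<n})). (if k \<noteq> 2 then real k else 0) * expected_deg_count n d p k)
           = p * p * (\<Sum>i<n. real (d i)) - 2 * expected_deg_count n d p 2"
proof -
  let ?m = "Max (insert 0 (d ` {..<n}))"
  have "(\<Sum>k\<le>?m. (if k \<noteq> 2 then real k else 0) * expected_deg_count n d p k)
      = (\<Sum>k\<le>?m. real k * expected_deg_count n d p k
                   - (if k = 2 then 2 * expected_deg_count n d p 2 else 0))"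
    by (intro sum.cong) auto
  also have "\<dots> = p * p * (\<Sum>i<n. real (d i))
                   - (if 2 \<in> {..?m} then 2 * expected_deg_count n d p 2 else 0)"
    by (simp only: sum_subtractf sum_mult_expected_deg_count[OF assms] sum.delta finite_atMost)
  also have "(if 2 \<in> {..?m} then 2 * expected_deg_count n d p 2 else 0)
      = 2 * expected_deg_count n d p 2"
  proof (cases "2 \<in> {..?m}")
    case False
    then have "d i < 2" if "i < n" for i using le_Max_degree[OF that, of d] by auto
    then have "expected_deg_count n d p 2 = 0"
      unfolding expected_deg_count_def using assms by (simp add: binomial_eq_0)
    then show ?thesis by simp
  qed simp
  finally show ?thesis .
qed

lemma dA_sums_approx:
  assumes p: "0 \<le> p" "p \<le> 1" and D: "\<And>i. i < n \<Longrightarrow> d i \<le> D"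
  shows "\<bar>real (seqM (dA n d p)) - p * p * (\<Sum>i<n. real (d i))\<bar> \<le> (real D + 1)\<^sup>2"
    and "\<bar>real (seqMJ (dA n d p))
            - (p * p * (\<Sum>i<n. real (d i)) - 2 * expected_deg_count n d p 2)\<bar> \<le> (real D + 1)\<^sup>2"
proof -
  let ?m = "Max (insert 0 (d ` {..<n}))"
  have "?m \<le> D" using D by (subst Max_le_iff) auto
  then have m_le: "(real ?m + 1)\<^sup>2 \<le> (real D + 1)\<^sup>2" by (intro power_mono) auto
  have "real (seqM (dA n d p)) = (\<Sum>k\<le>?m. real k * real (nA n d p k))"
    unfolding seqM_dA by simp
  then have "\<bar>real (seqM (dA n d p)) - p * p * (\<Sum>i<n. real (d i))\<bar> \<le> (real ?m + 1)\<^sup>2"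
    using abs_weighted_sum_nA_sub_le[OF p(1), of ?m real n d]
    unfolding sum_mult_expected_deg_count[OF p] by simp
  then show "\<bar>real (seqM (dA n d p)) - p * p * (\<Sum>i<n. real (d i))\<bar> \<le> (real D + 1)\<^sup>2"
    using m_le by linarith
  have "real (seqMJ (dA n d p)) = (\<Sum>k\<le>?m. (if k \<noteq> 2 then real k else 0) * real (nA n d p k))"
    unfolding seqMJ_dA of_nat_sum by (intro sum.cong) auto
  then have "\<bar>real (seqMJ (dA n d p))
      - (p * p * (\<Sum>i<n. real (d i)) - 2 * expected_deg_count n d p 2)\<bar> \<le> (real ?m + 1)\<^sup>2"
    using abs_weighted_sum_nA_sub_le[OF p(1), of ?m "\<lambda>k. if k \<noteq> 2 then real k else 0" n d]
    unfolding sum_mult_expected_deg_count_not_2[OF p] by fastforce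
  then show "\<bar>real (seqMJ (dA n d p))
      - (p * p * (\<Sum>i<n. real (d i)) - 2 * expected_deg_count n d p 2)\<bar> \<le> (real D + 1)\<^sup>2"
    using m_le by linarith
qed

lemma mult_exp_neg_le: "x * exp (- x) \<le> exp (-1 :: real)"
proof -
  have "x * exp (-x) \<le> exp (x - 1) * exp (-x)"
    using exp_ge_add_one_self[of "x - 1"] by (intro mult_right_mono) auto
  then show ?thesis by (simp flip: exp_add)
qed

lemma exp_minus_one_le: "exp (-1 :: real) \<le> 4/9"
proof -
  have "(3/2 :: real)\<^sup>2 \<le> exp (1/2) ^ 2"
    using exp_ge_add_one_self[of "1/2 :: real"] by (intro power_mono) auto
  also have "exp (1/2 :: real) ^ 2 = exp 1" by (simp flip: exp_of_nat_mult)
  finally have "9/4 \<le> exp (1::real)" by (simp add: power2_eq_square)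
  then show ?thesis by (simp add: exp_minus field_simps)
qed

lemma Suc_mult_power_one_minus_le:
  fixes p :: real
  assumes "0 < p" "p < 1" "1 \<le> m"
  shows "(real m + 1) * p * (1 - p) ^ m \<le> 8/9"
proof -
  have "(1 - p) ^ m \<le> exp (-p) ^ m"
    using assms by (intro power_mono) (auto simp: exp_ge_add_one_self[of "-p", simplified])
  also have "exp (-p) ^ m = exp (- (m * p))" by (simp flip: exp_of_nat_mult)
  finally have "(real m + 1) * p * (1 - p) ^ m \<le> (2 * m) * p * exp (- (m * p))"
    using assms by (intro mult_mono) auto
  also have "\<dots> = 2 * ((m * p) * exp (- (m * p)))" by simp
  also have "\<dots> \<le> 2 * exp (-1)" using mult_exp_neg_le[of "m * p"] by simp
  also have "\<dots> \<le> 8/9" using exp_minus_one_le by simp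
  finally show ?thesis .
qed

text \<open>For \<open>d \<ge> 3\<close> this follows from the bound above and for \<open>d = 2\<close> from \<open>p < 1 - \<epsilon>\<close>;
this is where the constant \<open>min (1/9) \<epsilon>\<close> comes from.\<close>

lemma two_pmf_binomial_2_le:
  fixes p \<epsilon> :: real
  assumes p: "0 < p" "p < 1 - \<epsilon>" and "0 < \<epsilon>" and "1 \<le> d"
  shows "2 * pmf (binomial_pmf d p) 2 \<le> (1 - min (1/9) \<epsilon>) * (real d * p)"
proof (cases "d = 1")
  case False
  define m where "m = d - 2"
  have m: "d = m + 2" using assms False unfolding m_def by linarith
  have choose_2: "2 * real (d choose 2) = real d * (real m + 1)"
    using times_binomial_minus1_eq[of 2 d] m by (simp add: algebra_simps flip: of_nat_mult)
  have "2 * pmf (binomial_pmf d p) 2 = 2 * real (d choose 2) * p\<^sup>2 * (1 - p) ^ m"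
    using assms m by simp
  also have "\<dots> = (real d * p) * ((real m + 1) * p * (1 - p) ^ m)"
    unfolding choose_2 by (simp add: power2_eq_square algebra_simps)
  also have "\<dots> \<le> (real d * p) * (1 - min (1/9) \<epsilon>)"
  proof (rule mult_left_mono)
    show "(real m + 1) * p * (1 - p) ^ m \<le> 1 - min (1/9) \<epsilon>"
      using Suc_mult_power_one_minus_le[of p m] p \<open>0 < \<epsilon>\<close> by (cases "m = 0") auto
  qed (use p in simp)
  finally show ?thesis by (simp add: mult.commute)
qed (use assms in \<open>simp add: binomial_eq_0\<close>)

lemma two_expected_deg_count_2_le:
  fixes p \<epsilon> :: real and d :: "nat \<Rightarrow> nat"
  assumes "0 < p" "p < 1 - \<epsilon>" "0 < \<epsilon>" "\<And>i. i < n \<Longrightarrow> 1 \<le> d i"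
  shows "2 * expected_deg_count n d p 2 \<le> (1 - min (1/9) \<epsilon>) * (p * p * (\<Sum>i<n. real (d i)))"
proof -
  have "2 * expected_deg_count n d p 2 = p * (\<Sum>i<n. 2 * pmf (binomial_pmf (d i) p) 2)"
    unfolding expected_deg_count_def by (simp add: sum_distrib_left mult.left_commute)
  also have "\<dots> \<le> p * (\<Sum>i<n. (1 - min (1/9) \<epsilon>) * (real (d i) * p))"
    using assms two_pmf_binomial_2_le by (intro mult_left_mono sum_mono) auto
  finally show ?thesis by (simp add: sum_distrib_left algebra_simps)
qed

section \<open>Concentration of \<open>M\<^sub>J(d\<^sub>S)\<close> for a fixed graph\<close>

text \<open>An outcome \<open>f\<close> of the coin flips encodes the vertex set \<open>S = {i < n. f i}\<close>.\<close>

locale subgraph_sampling =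
  fixes n :: nat and d :: "nat \<Rightarrow> nat" and E :: "nat set set" and p :: real and D :: nat
  assumes graph: "E \<in> simple_graphs_deg n d"
  assumes p: "0 \<le> p" "p \<le> 1"
  assumes max_degree: "\<And>i. i < n \<Longrightarrow> d i \<le> D"
begin

abbreviation coins :: "(nat \<Rightarrow> bool) pmf" where
  "coins \<equiv> coin_flips {..<n} p"

definition edge_kept :: "nat set \<Rightarrow> (nat \<Rightarrow> bool) \<Rightarrow> real" where
  "edge_kept e f = of_bool (\<forall>i\<in>e. f i)"

definition deg2_kept :: "nat \<Rightarrow> (nat \<Rightarrow> bool) \<Rightarrow> real" where
  "deg2_kept v f = of_bool (f v) * of_bool (card {u\<in>nbhd E v. f u} = 2)"

definition closed_nbhd :: "nat \<Rightarrow> nat set" where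
  "closed_nbhd v = insert v (nbhd E v)"

lemma finite_set_coins: "finite (set_pmf coins)"
  by (simp add: finite_set_Pi_pmf_bool)

lemma edge_kept_nonneg: "0 \<le> edge_kept e f"
  by (simp add: edge_kept_def)

lemma deg2_kept_nonneg: "0 \<le> deg2_kept v f"
  by (simp add: deg2_kept_def)

lemma card_edges_kept:
  "real (card {e\<in>E. e \<subseteq> {i\<in>{..<n}. f i}}) = (\<Sum>e\<in>E. edge_kept e f)"
proof -
  have "{e\<in>E. e \<subseteq> {i\<in>{..<n}. f i}} = {e\<in>E. \<forall>i\<in>e. f i}"
    using simple_graph_edge_subset[OF graph] by blast
  then show ?thesis
    using finite_simple_graph[OF graph] by (simp add: edge_kept_def of_bool_def sum.If_cases Int_def)
qed

lemma card_deg2_kept: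
  "real (card {v\<in>{i\<in>{..<n}. f i}. card {e\<in>E. v \<in> e \<and> e \<subseteq> {i\<in>{..<n}. f i}} = 2})
     = (\<Sum>v<n. deg2_kept v f)"
proof -
  have "card {e\<in>E. v \<in> e \<and> e \<subseteq> {i\<in>{..<n}. f i}} = card {u\<in>nbhd E v. f u}" if "f v" for v
  proof -
    have "{u\<in>nbhd E v. {u, v} \<subseteq> {i\<in>{..<n}. f i}} = {u\<in>nbhd E v. f u}"
      using that simple_graph_pair[OF graph] unfolding nbhd_def by auto
    then show ?thesis by (simp add: card_edges_at_eq_card_nbhd[OF graph])
  qed
  then have "{v\<in>{i\<in>{..<n}. f i}. card {e\<in>E. v \<in> e \<and> e \<subseteq> {i\<in>{..<n}. f i}} = 2}
      = {v\<in>{..<n}. f v \<and> card {u\<in>nbhd E v. f u} = 2}"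
    by auto
  then show ?thesis unfolding deg2_kept_def of_bool_conj[symmetric] by (simp add: Int_def)
qed

lemma expectation_edge_kept: "e \<in> E \<Longrightarrow> expectation_fin coins (edge_kept e) = p\<^sup>2"
  unfolding edge_kept_def
  using expectation_fin_coin_flips_all[of "{..<n}" e p] p simple_graph_edge_subset[OF graph] by auto

lemma expectation_deg2_kept:
  assumes v: "v < n"
  shows "expectation_fin coins (deg2_kept v) = p * pmf (binomial_pmf (d v) p) 2"
proof -
  have "expectation_fin coins (deg2_kept v)
      = expectation_fin coins (\<lambda>f. of_bool (f v))
        * expectation_fin coins (\<lambda>f. of_bool (card {u\<in>nbhd E v. f u} = 2))"
    unfolding deg2_kept_def
  proof (rule expectation_fin_Pi_pmf_mult_disjoint[where A="{v}" and B="nbhd E v"])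
    fix f g :: "nat \<Rightarrow> bool"
    assume "\<And>i. i \<in> nbhd E v \<Longrightarrow> f i = g i"
    then have "{u\<in>nbhd E v. f u} = {u\<in>nbhd E v. g u}" by auto
    then show "of_bool (card {u\<in>nbhd E v. f u} = 2) = (of_bool (card {u\<in>nbhd E v. g u} = 2) :: real)"
      by simp
  qed (use v nbhd_subset[OF graph] not_in_nbhd[OF graph] in auto)
  also have "\<dots> = p * pmf (binomial_pmf (card (nbhd E v)) p) 2"
    using v p nbhd_subset[OF graph]
    by (simp add: expectation_fin_coin_flips_coord expectation_fin_coin_flips_card_heads)
  finally show ?thesis using card_nbhd[OF graph v] by simp
qed

lemma edge_kept_uncorrelated:
  assumes "e \<in> E" "e' \<in> E" "e \<inter> e' = {}"
  shows "expectation_fin coins (\<lambda>f. edge_kept e f * edge_kept e' f)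
           = expectation_fin coins (edge_kept e) * expectation_fin coins (edge_kept e')"
  unfolding edge_kept_def
  by (rule expectation_fin_Pi_pmf_mult_disjoint[where A=e and B=e'])
     (use assms simple_graph_edge_subset[OF graph] in auto)

lemma deg2_kept_uncorrelated:
  assumes "v < n" "w < n" "closed_nbhd v \<inter> closed_nbhd w = {}"
  shows "expectation_fin coins (\<lambda>f. deg2_kept v f * deg2_kept w f)
           = expectation_fin coins (deg2_kept v) * expectation_fin coins (deg2_kept w)"
proof (rule expectation_fin_Pi_pmf_mult_disjoint[where A="closed_nbhd v" and B="closed_nbhd w"])
  have deg2_kept_local: "deg2_kept x f = deg2_kept x g"
    if "\<And>i. i \<in> closed_nbhd x \<Longrightarrow> f i = g i" for x f g
  proof -
    have "{u\<in>nbhd E x. f u} = {u\<in>nbhd E x. g u}" "f x = g x"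
      using that by (auto simp: closed_nbhd_def)
    then show ?thesis by (simp add: deg2_kept_def)
  qed
  fix f g :: "nat \<Rightarrow> bool"
  show "(\<And>i. i \<in> closed_nbhd v \<Longrightarrow> f i = g i) \<Longrightarrow> deg2_kept v f = deg2_kept v g"
    "(\<And>i. i \<in> closed_nbhd w \<Longrightarrow> f i = g i) \<Longrightarrow> deg2_kept w f = deg2_kept w g"
    by (rule deg2_kept_local, assumption)+
qed (use assms nbhd_subset[OF graph] in \<open>auto simp: closed_nbhd_def\<close>)

lemma expectation_edge_kept_mult_le:
  assumes "e \<in> E"
  shows "expectation_fin coins (\<lambda>f. edge_kept e f * edge_kept e' f) \<le> p"
proof -
  have "expectation_fin coins (\<lambda>f. edge_kept e f * edge_kept e' f) \<le> expectation_fin coins (edge_kept e)"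
    by (rule expectation_fin_mono) (auto simp: edge_kept_def)
  also have "\<dots> = p\<^sup>2" using expectation_edge_kept[OF assms] .
  also have "\<dots> \<le> p" using p by (simp add: power2_eq_square mult_left_le)
  finally show ?thesis .
qed

lemma expectation_deg2_kept_mult_le:
  assumes "v < n"
  shows "expectation_fin coins (\<lambda>f. deg2_kept v f * deg2_kept w f) \<le> p"
proof -
  have "expectation_fin coins (\<lambda>f. deg2_kept v f * deg2_kept w f)
      \<le> expectation_fin coins (\<lambda>f. of_bool (f v))"
    by (rule expectation_fin_mono) (auto simp: deg2_kept_def)
  also have "\<dots> = p" using assms p by (simp add: expectation_fin_coin_flips_coord)
  finally show ?thesis .
qed

lemma card_edges_meeting_le:
  assumes e: "e \<in> E"
  shows "card {e'\<in>E. e \<inter> e' \<noteq> {}} \<le> 2 * D"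
proof -
  have e_sub: "e \<subseteq> {..<n}" "card e = 2" using simple_graph_edge_subset[OF graph e] by auto
  then have fin_e: "finite e" by (auto intro: finite_subset)
  have "{e'\<in>E. e \<inter> e' \<noteq> {}} = (\<Union>x\<in>e. {e'\<in>E. x \<in> e'})" by auto
  then have "card {e'\<in>E. e \<inter> e' \<noteq> {}} \<le> (\<Sum>x\<in>e. card {e'\<in>E. x \<in> e'})"
    using card_UN_le[OF fin_e, of "\<lambda>x. {e'\<in>E. x \<in> e'}"] by simp
  also have "\<dots> \<le> (\<Sum>x\<in>e. D)"
    using e_sub simple_graph_degree[OF graph] max_degree by (intro sum_mono) auto
  finally show ?thesis using e_sub by simp
qed

lemma card_closed_nbhd: "x < n \<Longrightarrow> card (closed_nbhd x) = 1 + d x"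
  unfolding closed_nbhd_def
  using finite_nbhd[OF graph] not_in_nbhd[OF graph] card_nbhd[OF graph] by simp

lemma card_closed_nbhds_meeting_le:
  assumes v: "v < n"
  shows "card {w\<in>{..<n}. closed_nbhd v \<inter> closed_nbhd w \<noteq> {}} \<le> (1 + d v) * (1 + D)"
proof -
  have fin: "finite (closed_nbhd x)" for x
    unfolding closed_nbhd_def using finite_nbhd[OF graph] by simp
  have "{w\<in>{..<n}. closed_nbhd v \<inter> closed_nbhd w \<noteq> {}} \<subseteq> (\<Union>x\<in>closed_nbhd v. closed_nbhd x)"
    unfolding closed_nbhd_def using nbhd_sym by blast
  then have "card {w\<in>{..<n}. closed_nbhd v \<inter> closed_nbhd w \<noteq> {}}
      \<le> card (\<Union>x\<in>closed_nbhd v. closed_nbhd x)"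
    by (rule card_mono[rotated]) (simp add: fin)
  also have "\<dots> \<le> (\<Sum>x\<in>closed_nbhd v. card (closed_nbhd x))"
    by (rule card_UN_le) (simp add: fin)
  also have "\<dots> \<le> (\<Sum>x\<in>closed_nbhd v. 1 + D)"
  proof (rule sum_mono)
    fix x assume "x \<in> closed_nbhd v"
    then have "x < n" using v nbhd_subset[OF graph, of v] by (auto simp: closed_nbhd_def)
    then show "card (closed_nbhd x) \<le> 1 + D" using card_closed_nbhd max_degree by simp
  qed
  also have "\<dots> = (1 + d v) * (1 + D)" using card_closed_nbhd[OF v] by simp
  finally show ?thesis .
qed

lemma variance_edges_kept:
  "expectation_fin coins (\<lambda>f. ((\<Sum>e\<in>E. edge_kept e f) - p\<^sup>2 * real (card E))\<^sup>2)
     \<le> real D * p * (\<Sum>i<n. real (d i))"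
proof -
  have mean: "(\<Sum>e\<in>E. expectation_fin coins (edge_kept e)) = p\<^sup>2 * real (card E)"
    using expectation_edge_kept by simp
  have "expectation_fin coins (\<lambda>f. ((\<Sum>e\<in>E. edge_kept e f) - p\<^sup>2 * real (card E))\<^sup>2)
      \<le> (\<Sum>e\<in>E. \<Sum>e'\<in>{e'\<in>E. e \<inter> e' \<noteq> {}}. expectation_fin coins (\<lambda>f. edge_kept e f * edge_kept e' f))"
    unfolding mean[symmetric] using finite_set_coins finite_simple_graph[OF graph]
    by (rule variance_sum_le_dependent_pairs) (auto intro: edge_kept_uncorrelated edge_kept_nonneg)
  also have "\<dots> \<le> (\<Sum>e\<in>E. real (2 * D) * p)"
  proof (rule sum_mono)
    fix e assume e: "e \<in> E"
    have "(\<Sum>e'\<in>{e'\<in>E. e \<inter> e' \<noteq> {}}. expectation_fin coins (\<lambda>f. edge_kept e f * edge_kept e' f))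
        \<le> real (card {e'\<in>E. e \<inter> e' \<noteq> {}}) * p"
      by (rule sum_bounded_above) (rule expectation_edge_kept_mult_le[OF e])
    also have "\<dots> \<le> real (2 * D) * p"
      using card_edges_meeting_le[OF e] p by (intro mult_right_mono) auto
    finally show "(\<Sum>e'\<in>{e'\<in>E. e \<inter> e' \<noteq> {}}. expectation_fin coins (\<lambda>f. edge_kept e f * edge_kept e' f))
        \<le> real (2 * D) * p" .
  qed
  also have "\<dots> = real D * p * (\<Sum>i<n. real (d i))"
    by (simp add: handshake_simple_graph[OF graph] algebra_simps)
  finally show ?thesis .
qed

lemma variance_deg2_kept:
  "expectation_fin coins (\<lambda>f. ((\<Sum>v<n. deg2_kept v f) - expected_deg_count n d p 2)\<^sup>2)
     \<le> p * (1 + real D) * (real n + (\<Sum>i<n. real (d i)))"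
proof -
  have mean: "(\<Sum>v<n. expectation_fin coins (deg2_kept v)) = expected_deg_count n d p 2"
    by (simp add: expectation_deg2_kept expected_deg_count_def sum_distrib_left)
  have "expectation_fin coins (\<lambda>f. ((\<Sum>v<n. deg2_kept v f) - expected_deg_count n d p 2)\<^sup>2)
      \<le> (\<Sum>v<n. \<Sum>w\<in>{w\<in>{..<n}. closed_nbhd v \<inter> closed_nbhd w \<noteq> {}}.
             expectation_fin coins (\<lambda>f. deg2_kept v f * deg2_kept w f))"
    unfolding mean[symmetric] using finite_set_coins
    by (rule variance_sum_le_dependent_pairs) (auto intro: deg2_kept_uncorrelated deg2_kept_nonneg)
  also have "\<dots> \<le> (\<Sum>v<n. real ((1 + d v) * (1 + D)) * p)"
  proof (rule sum_mono)
    fix v assume "v \<in> {..<n}"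
    then have v: "v < n" by simp
    have "(\<Sum>w\<in>{w\<in>{..<n}. closed_nbhd v \<inter> closed_nbhd w \<noteq> {}}.
             expectation_fin coins (\<lambda>f. deg2_kept v f * deg2_kept w f))
        \<le> real (card {w\<in>{..<n}. closed_nbhd v \<inter> closed_nbhd w \<noteq> {}}) * p"
      by (rule sum_bounded_above) (rule expectation_deg2_kept_mult_le[OF v])
    also have "\<dots> \<le> real ((1 + d v) * (1 + D)) * p"
      using card_closed_nbhds_meeting_le[OF v] p by (intro mult_right_mono) (simp_all only: of_nat_le_iff)
    finally show "(\<Sum>w\<in>{w\<in>{..<n}. closed_nbhd v \<inter> closed_nbhd w \<noteq> {}}.
             expectation_fin coins (\<lambda>f. deg2_kept v f * deg2_kept w f))
        \<le> real ((1 + d v) * (1 + D)) * p" .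
  qed
  also have "\<dots> = p * (1 + real D) * (real n + (\<Sum>i<n. real (d i)))"
    by (simp add: sum_distrib_left sum_distrib_right sum.distrib algebra_simps)
  finally show ?thesis .
qed

lemma prob_seqMJ_induced_deviation:
  assumes t: "t > 0"
  shows "measure_pmf.prob (random_subset n p)
           {S. 4 * t < \<bar>real (seqMJ (induced_degseq E S))
                          - (p * p * (\<Sum>i<n. real (d i)) - 2 * expected_deg_count n d p 2)\<bar>}
         \<le> p * (real D * (\<Sum>i<n. real (d i)) + (1 + real D) * (real n + (\<Sum>i<n. real (d i)))) / t\<^sup>2"
proof -
  let ?a2 = "expected_deg_count n d p 2"
  let ?S = "\<lambda>f::nat\<Rightarrow>bool. {i\<in>{..<n}. f i}"
  let ?far = "{S. 4 * t < \<bar>real (seqMJ (induced_degseq E S))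
                          - (p * p * (\<Sum>i<n. real (d i)) - 2 * ?a2)\<bar>}"
  let ?edges_far = "{f. t < \<bar>(\<Sum>e\<in>E. edge_kept e f) - p\<^sup>2 * real (card E)\<bar>}"
  let ?deg2_far = "{f. t < \<bar>(\<Sum>v<n. deg2_kept v f) - ?a2\<bar>}"
  have "?S -` ?far \<subseteq> ?edges_far \<union> ?deg2_far"
  proof
    fix f assume far: "f \<in> ?S -` ?far"
    have MJ: "real (seqMJ (induced_degseq E (?S f)))
        = 2 * (\<Sum>e\<in>E. edge_kept e f) - 2 * (\<Sum>v<n. deg2_kept v f)"
      using seqMJ_induced_degseq[OF graph, of "?S f"] card_edges_kept card_deg2_kept by auto
    show "f \<in> ?edges_far \<union> ?deg2_far"
    proof (rule ccontr)
      assume "f \<notin> ?edges_far \<union> ?deg2_far"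
      then have "\<bar>(\<Sum>e\<in>E. edge_kept e f) - p\<^sup>2 * real (card E)\<bar> \<le> t"
        and "\<bar>(\<Sum>v<n. deg2_kept v f) - ?a2\<bar> \<le> t" by auto
      then have "\<bar>real (seqMJ (induced_degseq E (?S f)))
          - (p * p * (\<Sum>i<n. real (d i)) - 2 * ?a2)\<bar> \<le> 4 * t"
        unfolding MJ handshake_simple_graph[OF graph] by (simp add: power2_eq_square abs_le_iff)
      then show False using far by auto
    qed
  qed
  then have "measure_pmf.prob (random_subset n p) ?far \<le> measure_pmf.prob coins (?edges_far \<union> ?deg2_far)"
    unfolding random_subset_def by (auto simp: measure_map_pmf intro!: measure_pmf.finite_measure_mono)
  also have "\<dots> \<le> measure_pmf.prob coins ?edges_far + measure_pmf.prob coins ?deg2_far"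
    by (rule measure_Un_le) simp_all
  also have "measure_pmf.prob coins ?edges_far \<le> real D * p * (\<Sum>i<n. real (d i)) / t\<^sup>2"
    using chebyshev_expectation_fin[OF finite_set_coins t, of "\<lambda>f. \<Sum>e\<in>E. edge_kept e f"]
      variance_edges_kept
    by (meson divide_right_mono order_trans zero_le_power2)
  also have "measure_pmf.prob coins ?deg2_far \<le> p * (1 + real D) * (real n + (\<Sum>i<n. real (d i))) / t\<^sup>2"
    using chebyshev_expectation_fin[OF finite_set_coins t, of "\<lambda>f. \<Sum>v<n. deg2_kept v f"]
      variance_deg2_kept
    by (meson divide_right_mono order_trans zero_le_power2)
  finally show ?thesis by (simp add: add_divide_distrib[symmetric] algebra_simps)
qed

end

section \<open>Bounds for a fixed number of vertices\<close>

lemma prob_seqMJ_induced_close: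
  fixes n :: nat and d :: "nat \<Rightarrow> nat"
  defines "M \<equiv> \<Sum>i<n. real (d i)"
  assumes p: "0 \<le> p" "p \<le> 1" and D: "\<And>i. i < n \<Longrightarrow> d i \<le> D"
    and graphs: "simple_graphs_deg n d \<noteq> {}" and t: "t > 0"
    and x: "\<bar>x - (p * p * M - 2 * expected_deg_count n d p 2)\<bar> \<le> err"
  shows "1 - p * (real D * M + (1 + real D) * (real n + M)) / t\<^sup>2
           \<le> measure_pmf.prob (graph_subset_pmf n d p)
                {(E, S). \<bar>x - real (seqMJ (induced_degseq E S))\<bar> \<le> err + 4 * t}"
proof -
  let ?far = "\<lambda>E S. 4 * t < \<bar>real (seqMJ (induced_degseq E S))
                              - (p * p * M - 2 * expected_deg_count n d p 2)\<bar>"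
  have "measure_pmf.prob (graph_subset_pmf n d p) {z. ?far (fst z) (snd z)}
      \<le> p * (real D * M + (1 + real D) * (real n + M)) / t\<^sup>2"
    unfolding graph_subset_pmf_def
  proof (rule prob_pair_pmf_le)
    show "finite (set_pmf (pmf_of_set (simple_graphs_deg n d)))"
      using finite_simple_graphs_deg graphs by simp
    show "finite (set_pmf (random_subset n p))"
      unfolding random_subset_def by (simp add: finite_set_Pi_pmf_bool)
    fix E assume "E \<in> set_pmf (pmf_of_set (simple_graphs_deg n d))"
    then interpret subgraph_sampling n d E p D
      using finite_simple_graphs_deg graphs p D by unfold_locales auto
    show "measure_pmf.prob (random_subset n p) {S. ?far E S}
        \<le> p * (real D * M + (1 + real D) * (real n + M)) / t\<^sup>2"
      unfolding M_def by (rule prob_seqMJ_induced_deviation[OF t])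
  qed
  moreover have "measure_pmf.prob (graph_subset_pmf n d p) (UNIV - {z. ?far (fst z) (snd z)})
      \<le> measure_pmf.prob (graph_subset_pmf n d p)
           {(E, S). \<bar>x - real (seqMJ (induced_degseq E S))\<bar> \<le> err + 4 * t}"
    using x by (intro measure_pmf.finite_measure_mono) auto
  ultimately show ?thesis
    using measure_pmf.prob_compl[of "{z. ?far (fst z) (snd z)}" "graph_subset_pmf n d p"] by simp
qed

lemma dA_seqM_seqMJ_bounds:
  fixes n :: nat and d :: "nat \<Rightarrow> nat" and p \<epsilon> :: real
  defines "M \<equiv> \<Sum>i<n. real (d i)" and "c \<equiv> min (1/9) \<epsilon>"
  assumes p: "0 < p" "p < 1 - \<epsilon>" and eps: "0 < \<epsilon>"
    and d: "\<And>i. i < n \<Longrightarrow> 1 \<le> d i" "\<And>i. i < n \<Longrightarrow> d i \<le> D"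
    and small: "(real D + 1)\<^sup>2 \<le> c / 2 * (p * p * M)"
  shows "p * p * M \<le> 2 * real (seqM (dA n d p))"
    and "c / 4 * real (seqM (dA n d p)) \<le> real (seqMJ (dA n d p))"
proof -
  let ?Ma = "real (seqM (dA n d p))" and ?MJa = "real (seqMJ (dA n d p))"
  define X where "X = p * p * M"
  have p01: "0 \<le> p" "p \<le> 1" and c: "0 < c" "c \<le> 1/9" using p eps by (auto simp: c_def)
  have "0 \<le> X" using p by (simp add: X_def M_def sum_nonneg)
  then have cX: "c * X \<le> X" using c by (simp add: mult_left_le_one_le)
  have approx: "\<bar>?Ma - X\<bar> \<le> c * X / 2" "\<bar>?MJa - (X - 2 * expected_deg_count n d p 2)\<bar> \<le> c * X / 2"
    using dA_sums_approx[OF p01 d(2)] small unfolding M_def X_def by force+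
  then show "p * p * M \<le> 2 * ?Ma" using cX unfolding X_def by linarith
  have "2 * expected_deg_count n d p 2 \<le> X - c * X"
    using two_expected_deg_count_2_le[OF p eps d(1)] unfolding c_def X_def M_def
    by (simp add: algebra_simps)
  then have "c * X / 2 \<le> ?MJa" using approx(2) by linarith
  moreover have "?Ma \<le> 2 * X" using approx(1) cX by linarith
  then have "c * ?Ma \<le> c * (2 * X)" using c by (intro mult_left_mono) auto
  ultimately show "c / 4 * ?Ma \<le> ?MJa" by simp
qed

lemma sq_le_of_log_power_condition:
  fixes D p M \<delta> :: real
  assumes p: "0 < p" "p \<le> 1" and M: "2 \<le> M"
    and cond: "D\<^sup>2 * p powi (-12) * ln M ^ 12 \<le> \<delta> * p * M"
  shows "D\<^sup>2 \<le> \<delta> / ln 2 ^ 12 * p ^ 3 * M"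
proof -
  have "0 \<le> D\<^sup>2 * p powi (-12) * ln M ^ 12" using p M by simp
  then have "0 \<le> \<delta> * (p * M)" using order_trans[OF _ cond] by (simp add: mult.assoc)
  moreover have "0 < p * M" using p M by simp
  ultimately have "0 \<le> \<delta>" by (simp add: zero_le_mult_iff)
  have "D\<^sup>2 * ln 2 ^ 12 \<le> D\<^sup>2 * ln M ^ 12" using M by (intro mult_left_mono power_mono) auto
  also have "\<dots> = (D\<^sup>2 * p powi (-12) * ln M ^ 12) * p ^ 12"
    using p by (simp add: power_int_minus field_simps)
  also have "\<dots> \<le> (\<delta> * p * M) * p ^ 12" using cond p by (intro mult_right_mono) auto
  also have "\<dots> = \<delta> * M * p ^ 10 * p ^ 3" by (simp add: algebra_simps flip: power_Suc power_add)
  also have "\<dots> \<le> \<delta> * M * 1 * p ^ 3"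
    using p M \<open>0 \<le> \<delta>\<close> by (intro mult_right_mono mult_left_mono power_le_one) auto
  finally show ?thesis by (simp add: field_simps)
qed

lemma max_degree_small_of_log_condition:
  fixes d :: "nat \<Rightarrow> nat" and p \<delta> :: real
  assumes "n \<ge> 1" "\<forall>i<n. 1 \<le> d i" "even (\<Sum>i<n. d i)" "0 < p" "p \<le> 1"
    and "(real (d (n - 1)))\<^sup>2 * p powi (-12) * ln (real (\<Sum>i<n. d i)) ^ 12
           \<le> \<delta> * p * real (\<Sum>i<n. d i)"
  shows "(real (d (n - 1)))\<^sup>2 \<le> \<delta> / ln 2 ^ 12 * p ^ 3 * (\<Sum>i<n. real (d i))"
proof -
  have "1 \<le> (\<Sum>i<n. d i)" using assms(1,2) member_le_sum[of 0 "{..<n}" d] by auto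
  with assms(3) have "2 \<le> (\<Sum>i<n. d i)" by (cases "(\<Sum>i<n. d i) = 1") auto
  then have "2 \<le> real (\<Sum>i<n. d i)" by linarith
  from sq_le_of_log_power_condition[OF assms(4,5) this assms(6)] show ?thesis by simp
qed

context
  fixes n :: nat and d :: "nat \<Rightarrow> nat" and p \<epsilon> q :: real
  assumes n: "n \<ge> 1" and d: "\<forall>i<n. 1 \<le> d i" "\<forall>i j. i \<le> j \<and> j < n \<longrightarrow> d i \<le> d j"
    and p: "0 < p" "p < 1 - \<epsilon>" and eps: "0 < \<epsilon>"
    and q: "0 < q" "q ^ 4 \<le> min (1/9) \<epsilon> / 8"
    and max_degree_small: "(real (d (n - 1)))\<^sup>2 \<le> q ^ 4 * p ^ 3 * (\<Sum>i<n. real (d i))"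
begin

lemma degree_bounds:
  shows "1 \<le> real (d (n - 1))" and "real n \<le> (\<Sum>i<n. real (d i))"
    and "\<And>i. i < n \<Longrightarrow> d i \<le> d (n - 1)"
  using d n sum_mono[of "{..<n}" "\<lambda>_. 1" "\<lambda>i. real (d i)"] by auto

lemma max_degree_error_le:
  "(real (d (n - 1)) + 1)\<^sup>2 \<le> 4 * q ^ 4 * (p * p * (\<Sum>i<n. real (d i)))"
proof -
  have "p ^ 3 \<le> p * p" using p eps by (simp add: power3_eq_cube mult_right_le_one_le)
  then have "q ^ 4 * p ^ 3 * (\<Sum>i<n. real (d i)) \<le> q ^ 4 * (p * p) * (\<Sum>i<n. real (d i))"
    by (intro mult_left_mono mult_right_mono) (auto simp: sum_nonneg)
  moreover have "(real (d (n - 1)) + 1)\<^sup>2 \<le> 4 * (real (d (n - 1)))\<^sup>2"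
    using degree_bounds(1) power_mono[of "real (d (n - 1)) + 1" "2 * real (d (n - 1))" 2]
    by (simp add: power_mult_distrib)
  ultimately show ?thesis using max_degree_small by (simp add: mult.assoc)
qed

lemma dA_bounds_of_max_degree_small:
  shows "p * p * (\<Sum>i<n. real (d i)) \<le> 2 * real (seqM (dA n d p))"
    and "min (1/9) \<epsilon> / 4 * real (seqM (dA n d p)) \<le> real (seqMJ (dA n d p))"
proof -
  have "0 \<le> p * p * (\<Sum>i<n. real (d i))" by (simp add: sum_nonneg)
  then have "4 * q ^ 4 * (p * p * (\<Sum>i<n. real (d i)))
      \<le> min (1/9) \<epsilon> / 2 * (p * p * (\<Sum>i<n. real (d i)))"
    using q by (intro mult_right_mono) auto
  with max_degree_error_le
  show "p * p * (\<Sum>i<n. real (d i)) \<le> 2 * real (seqM (dA n d p))"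
    and "min (1/9) \<epsilon> / 4 * real (seqM (dA n d p)) \<le> real (seqMJ (dA n d p))"
    using dA_seqM_seqMJ_bounds[OF p eps, of n d "d (n - 1)"] d(1) degree_bounds(3) by auto
qed

lemma chebyshev_bound_le:
  defines "M \<equiv> \<Sum>i<n. real (d i)" and "\<Delta> \<equiv> real (d (n - 1))"
  shows "p * (\<Delta> * M + (1 + \<Delta>) * (real n + M)) / (q * (p * p * M))\<^sup>2 \<le> 5 * q\<^sup>2"
proof -
  have \<Delta>1: "1 \<le> \<Delta>" and nM: "real n \<le> M" using degree_bounds unfolding \<Delta>_def M_def by auto
  have "p * (\<Delta> * M + (1 + \<Delta>) * (real n + M)) \<le> p * (5 * \<Delta> * M)"
    using p \<Delta>1 nM mult_mono[of "1 + \<Delta>" "2 * \<Delta>" "n + M" "2 * M"]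
    by (intro mult_left_mono) (auto simp: mult.commute)
  also have "\<dots> \<le> p * (5 * (q ^ 4 * p ^ 3 * M) * M)"
  proof -
    have "\<Delta> * 1 \<le> \<Delta> * \<Delta>" using \<Delta>1 by (intro mult_left_mono) auto
    then have "\<Delta> \<le> q ^ 4 * p ^ 3 * M"
      using max_degree_small unfolding \<Delta>_def M_def by (simp add: power2_eq_square)
    then show ?thesis using p nM by (intro mult_left_mono mult_right_mono) auto
  qed
  also have "\<dots> = 5 * q\<^sup>2 * (q * (p * p * M))\<^sup>2"
    by (simp add: power2_eq_square power3_eq_cube power4_eq_xxxx algebra_simps)
  finally show ?thesis using p q n nM by (simp add: divide_le_eq)
qed

lemma prob_seqMJ_dA_close:
  assumes graphs: "simple_graphs_deg n d \<noteq> {}"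
  shows "1 - 5 * q\<^sup>2 \<le> measure_pmf.prob (graph_subset_pmf n d p)
           {(E, S). \<bar>real (seqMJ (dA n d p)) - real (seqMJ (induced_degseq E S))\<bar>
                      \<le> 8 * (q ^ 4 + q) * real (seqM (dA n d p))}"
proof -
  let ?Ma = "real (seqM (dA n d p))" and ?MJa = "real (seqMJ (dA n d p))"
  define M where "M = (\<Sum>i<n. real (d i))"
  define \<Delta> where "\<Delta> = real (d (n - 1))"
  define X where "X = p * p * M"
  define t where "t = q * X"
  have p01: "0 \<le> p" "p \<le> 1" using p eps by auto
  have nM: "real n \<le> M" using degree_bounds(2) unfolding M_def .
  have t: "0 < t" using p q n nM unfolding t_def X_def by simp
  have "\<bar>?MJa - (p * p * M - 2 * expected_deg_count n d p 2)\<bar> \<le> 4 * q ^ 4 * X"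
    using dA_sums_approx(2)[where n=n and d=d and D="d (n - 1)", OF p01 degree_bounds(3)]
      max_degree_error_le unfolding M_def X_def by linarith
  from prob_seqMJ_induced_close[where n=n and d=d and D="d (n - 1)",
      OF p01 degree_bounds(3) graphs t this[unfolded M_def]]
  have "1 - p * (\<Delta> * M + (1 + \<Delta>) * (n + M)) / t\<^sup>2
      \<le> measure_pmf.prob (graph_subset_pmf n d p)
           {(E, S). \<bar>?MJa - real (seqMJ (induced_degseq E S))\<bar> \<le> 4 * q ^ 4 * X + 4 * t}"
    unfolding \<Delta>_def M_def .
  also have "\<dots> \<le> measure_pmf.prob (graph_subset_pmf n d p)
           {(E, S). \<bar>?MJa - real (seqMJ (induced_degseq E S))\<bar> \<le> 8 * (q ^ 4 + q) * ?Ma}"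
  proof (rule measure_pmf.finite_measure_mono)
    have "4 * q ^ 4 * X + 4 * t = 4 * (q ^ 4 + q) * X" unfolding t_def by (simp add: algebra_simps)
    also have "\<dots> \<le> 4 * (q ^ 4 + q) * (2 * ?Ma)"
      using dA_bounds_of_max_degree_small(1) q unfolding X_def M_def by (intro mult_left_mono) auto
    also have "\<dots> = 8 * (q ^ 4 + q) * ?Ma" by simp
    finally show "{(E, S). \<bar>?MJa - real (seqMJ (induced_degseq E S))\<bar> \<le> 4 * q ^ 4 * X + 4 * t}
        \<subseteq> {(E, S). \<bar>?MJa - real (seqMJ (induced_degseq E S))\<bar> \<le> 8 * (q ^ 4 + q) * ?Ma}"
      by (auto intro: order_trans)
  qed simp
  finally have "1 - p * (\<Delta> * M + (1 + \<Delta>) * (n + M)) / t\<^sup>2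
      \<le> measure_pmf.prob (graph_subset_pmf n d p)
           {(E, S). \<bar>?MJa - real (seqMJ (induced_degseq E S))\<bar> \<le> 8 * (q ^ 4 + q) * ?Ma}" .
  moreover have "p * (\<Delta> * M + (1 + \<Delta>) * (n + M)) / t\<^sup>2 \<le> 5 * q\<^sup>2"
    unfolding \<Delta>_def M_def t_def X_def by (rule chebyshev_bound_le)
  ultimately show ?thesis by linarith
qed

end

lemma fixed_n_bounds:
  fixes n :: nat and d :: "nat \<Rightarrow> nat" and p \<epsilon> \<delta> :: real
  defines "q \<equiv> root 4 (\<delta> / ln 2 ^ 12)"
  assumes degs: "n \<ge> 1 \<and> (\<forall>i<n. 1 \<le> d i) \<and> (\<forall>i j. i \<le> j \<and> j < n \<longrightarrow> d i \<le> d j)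
                   \<and> even (\<Sum>i<n. d i) \<and> simple_graphs_deg n d \<noteq> {}"
    and p: "0 < p \<and> p < 1 - \<epsilon>" and eps: "0 < \<epsilon>" and \<delta>: "0 < \<delta>"
    and q_small: "q ^ 4 < min (1/9) \<epsilon> / 8"
    and cond: "(real (d (n - 1)))\<^sup>2 * p powi (-12) * ln (real (\<Sum>i<n. d i)) ^ 12
                 \<le> \<delta> * p * real (\<Sum>i<n. d i)"
  shows "min (1/9) \<epsilon> / 4 * real (seqM (dA n d p)) \<le> real (seqMJ (dA n d p))
         \<and> 1 - 5 * q\<^sup>2 \<le> measure_pmf.prob (graph_subset_pmf n d p)
             {(E, S). \<bar>real (seqMJ (dA n d p)) - real (seqMJ (induced_degseq E S))\<bar>
                        \<le> 8 * (q ^ 4 + q) * real (seqM (dA n d p))}"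
proof -
  have q: "0 < q" "q ^ 4 \<le> min (1/9) \<epsilon> / 8" "q ^ 4 = \<delta> / ln 2 ^ 12"
    using \<delta> q_small by (auto simp: q_def)
  have small: "(real (d (n - 1)))\<^sup>2 \<le> q ^ 4 * p ^ 3 * (\<Sum>i<n. real (d i))"
    unfolding q(3) using degs p eps cond by (intro max_degree_small_of_log_condition) auto
  from degs have n: "n \<ge> 1" and d: "\<forall>i<n. 1 \<le> d i" "\<forall>i j. i \<le> j \<and> j < n \<longrightarrow> d i \<le> d j"
    and graphs: "simple_graphs_deg n d \<noteq> {}" by auto
  from p have p': "0 < p" "p < 1 - \<epsilon>" by auto
  show ?thesis
    using dA_bounds_of_max_degree_small(2)[OF n d p' eps q(1,2) small]
      prob_seqMJ_dA_close[OF n d p' eps q(1,2) small graphs] by simp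
qed

theorem lemma7p1:
  fixes d :: "nat \<Rightarrow> nat \<Rightarrow> nat" and p \<delta> :: "nat \<Rightarrow> real" and \<epsilon> :: real
  defines "M \<equiv> \<lambda>n. real (\<Sum>i<n. d n i)"
  defines "\<Delta> \<equiv> \<lambda>n. real (d n (n - 1))"
  assumes eps: "\<epsilon> > 0"
  assumes degs: "eventually (\<lambda>n. n \<ge> 1 \<and> (\<forall>i<n. 1 \<le> d n i)
                     \<and> (\<forall>i j. i \<le> j \<and> j < n \<longrightarrow> d n i \<le> d n j)
                     \<and> even (\<Sum>i<n. d n i)
                     \<and> simple_graphs_deg n (d n) \<noteq> {}) sequentially"
  assumes p_range: "eventually (\<lambda>n. 0 < p n \<and> p n < 1 - \<epsilon>) sequentially"
  assumes delta_pos: "eventually (\<lambda>n. \<delta> n > 0) sequentially"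
  assumes delta_lim: "\<delta> \<longlonglongrightarrow> 0"
  assumes delta_inv: "(\<lambda>n. 1 / \<delta> n) \<in> O(\<lambda>n. ln (ln (M n)))"
  assumes cond: "eventually (\<lambda>n. (\<Delta> n)\<^sup>2 * (p n) powi (-12) * (ln (M n)) ^ 12
                        \<le> \<delta> n * p n * M n) sequentially"
  shows "(\<lambda>n. real (seqMJ (dA n (d n) (p n)))) \<in> \<Theta>(\<lambda>n. real (seqM (dA n (d n) (p n))))
       \<and> (\<exists>g :: nat \<Rightarrow> real. g \<in> o(\<lambda>n. real (seqM (dA n (d n) (p n)))) \<and>
           (\<lambda>n. measure_pmf.prob (graph_subset_pmf n (d n) (p n))
                  {(E, S). \<bar>real (seqMJ (dA n (d n) (p n)))
                            - real (seqMJ (induced_degseq E S))\<bar> \<le> g n})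
           \<longlonglongrightarrow> 1)"
proof -
  define c where "c = min (1/9) \<epsilon>"
  define q where "q n = root 4 (\<delta> n / ln 2 ^ 12)" for n
  let ?Ma = "\<lambda>n. real (seqM (dA n (d n) (p n)))"
  let ?MJa = "\<lambda>n. real (seqMJ (dA n (d n) (p n)))"
  define g where "g n = 8 * (q n ^ 4 + q n) * ?Ma n" for n
  let ?P = "\<lambda>n. measure_pmf.prob (graph_subset_pmf n (d n) (p n))
     {(E, S). \<bar>?MJa n - real (seqMJ (induced_degseq E S))\<bar> \<le> g n}"
  have q_lim: "q \<longlonglongrightarrow> 0"
    unfolding q_def using tendsto_real_root[OF tendsto_divide_zero[OF delta_lim], of 4] by simp
  have "(\<lambda>n. q n ^ 4) \<longlonglongrightarrow> 0" using tendsto_power[OF q_lim, of 4] by simp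
  moreover have "0 < c / 8" using eps by (simp add: c_def)
  ultimately have "eventually (\<lambda>n. q n ^ 4 < c / 8) sequentially" by (rule order_tendstoD(2))
  then have ev: "eventually (\<lambda>n. c / 4 * ?Ma n \<le> ?MJa n \<and> 1 - 5 * (q n)\<^sup>2 \<le> ?P n) sequentially"
    using degs p_range delta_pos cond
  proof eventually_elim
    case (elim n)
    then show ?case unfolding g_def q_def c_def M_def \<Delta>_def by (intro fixed_n_bounds eps) auto
  qed
  have "?MJa \<in> \<Theta>(?Ma)"
    using ev seqMJ_le_seqM eps by (intro bigthetaI'[of "c / 4" 1]) (auto simp: c_def elim!: eventually_mono)
  moreover have "g \<in> o(?Ma)"
  proof -
    have "(\<lambda>n. 8 * (q n ^ 4 + q n)) \<in> o(\<lambda>_. 1)"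
      using q_lim by (intro smalloI_tendsto) (auto intro!: tendsto_eq_intros)
    from landau_o.small_big_mult[OF this landau_o.big_refl[of ?Ma]]
    show ?thesis unfolding g_def by simp
  qed
  moreover have "?P \<longlonglongrightarrow> 1"
  proof (rule tendsto_sandwich)
    show "eventually (\<lambda>n. 1 - 5 * (q n)\<^sup>2 \<le> ?P n) sequentially" using ev by eventually_elim simp
    show "(\<lambda>n. 1 - 5 * (q n)\<^sup>2) \<longlonglongrightarrow> 1" using q_lim by (auto intro!: tendsto_eq_intros)
  qed auto
  ultimately show ?thesis by blast
qed

end
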